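(* Let $\mathsf P'\subset\mathbb R^m$ be a $(\mu',\epsilon')$-net, $0<\Gamma_0\le1$, and $0\le\delta_0\le\frac14$. Suppose $\tau=q*\sigma\subseteq\mathsf P'$ is a $(k+1)$-simplex which is a forbidden configuration certified by $q$ and $B(C,R)$. Then for every $p\in\tau$ there is a ball $B(C_p,R_p)$ circumscribing $\tau_p$ such that $$R_p\le\Big(1+\frac{3\delta_0}{\mu'\Gamma_0^k}\Big)R\quad\text{and}\quad d(p,\partial B(C_p,R_p))\le\frac{6\delta_0}{\mu'^2\Gamma_0^k}\,\ell(\tau_p).$$
   Context: Let $d(x,X)$ denote Euclidean distance from a point to a set; $B(c,r)$ is the open ball. For a finite $\mathsf P\subset\mathbb R^m$ and $\epsilon>0$, $\mathsf P$ is $\epsilon$-dense if $d(x,\mathsf P\cup\partial\,\mathrm{conv}(\mathsf P))<\epsilon$ for every $x\in\mathrm{conv}(\mathsf P)$; it is $\mu\epsilon$-separated if $\|p-q\|\ge\mu\epsilon$ for all distinct $p,q\in\mathsf P$. For $0<\mu\le1$, $\mathsf P$ is a $(\mu,\epsilon)$-net if it is $\epsilon$-dense and $\mu\epsilon$-separated. A simplex is a nonempty finite subset $\sigma\subset\mathbb R^m$ (vertices need not be affinely independent); $\dim\sigma=|\sigma|-1$; faces are nonempty subsets. For $p\in\sigma$, $\sigma_p=\sigma\setminus\{p\}$; for $p\notin\sigma$, $p*\sigma=\sigma\cup\{p\}$. $L(\sigma)$, $\ell(\sigma)$ are the largest and smallest distances between distinct vertices. Altitude $D(p,\sigma)=d(p,\mathrm{aff}(\sigma_p))$.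 Thickness of a $j$-simplex: $\Upsilon(\sigma)=1$ if $j=0$, else $\min_{p}D(p,\sigma)/(jL(\sigma))$. $\sigma$ is $\Gamma_0$-good if every $j$-face $\sigma^j$ satisfies $\Upsilon(\sigma^j)\ge\Gamma_0^j$; $\Gamma_0$-bad otherwise; a $\Gamma_0$-flake is a $\Gamma_0$-bad simplex whose proper faces are all $\Gamma_0$-good. A circumscribing ball of $\sigma$ is an open ball whose boundary contains all vertices of $\sigma$. Forbidden configuration: given finite $\mathsf P'\subset\mathbb R^m$ and parameters $\mu',\epsilon'>0$, $0<\Gamma_0\le1$, $\delta_0\ge0$, a $(k+1)$-simplex $\tau\subseteq\mathsf P'$ with $k\le m$ is a forbidden configuration if it is a $\Gamma_0$-flake and there exist $p\in\tau$ and a circumscribing ball $B(C,R)$ of $\tau_p$ with $R<\epsilon'$ and $\big|\,\|p-C\|-R\,\big|\le\delta_0\mu'\epsilon'$; it is then said to be certified by $p$ and $B(C,R)$. *)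

theory Defs
  imports "HOL-Analysis.Analysis"
begin

text \<open>Points live in an arbitrary Euclidean space 'a (playing the role of R^m, m = DIM('a)).
  d(x,X) is infdist x X. A simplex is a finite nonempty set of points.\<close>

definition eps_dense :: "'a::euclidean_space set \<Rightarrow> real \<Rightarrow> bool" where
  "eps_dense P \<epsilon> \<longleftrightarrow>
     (\<forall>x \<in> convex hull P. infdist x (P \<union> frontier (convex hull P)) < \<epsilon>)"

definition separated :: "'a::euclidean_space set \<Rightarrow> real \<Rightarrow> bool" where
  "separated P s \<longleftrightarrow> (\<forall>p\<in>P. \<forall>q\<in>P. p \<noteq> q \<longrightarrow> dist p q \<ge> s)"

definition is_net :: "'a::euclidean_space set \<Rightarrow> real \<Rightarrow> real \<Rightarrow> bool" where
  "is_net P \<mu> \<epsilon> \<longleftrightarrow> finite P \<and> 0 < \<epsilon> \<and> 0 < \<mu> \<and> \<mu> \<le> 1 \<and>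
     eps_dense P \<epsilon> \<and> separated P (\<mu> * \<epsilon>)"

definition is_simplex :: "'a set \<Rightarrow> bool" where
  "is_simplex \<sigma> \<longleftrightarrow> finite \<sigma> \<and> \<sigma> \<noteq> {}"

definition Lmax :: "'a::metric_space set \<Rightarrow> real" where
  "Lmax \<sigma> = Max {dist p q | p q. p \<in> \<sigma> \<and> q \<in> \<sigma> \<and> p \<noteq> q}"

definition lmin :: "'a::metric_space set \<Rightarrow> real" where
  "lmin \<sigma> = Min {dist p q | p q. p \<in> \<sigma> \<and> q \<in> \<sigma> \<and> p \<noteq> q}"

definition altitude :: "'a::euclidean_space \<Rightarrow> 'a set \<Rightarrow> real" where
  "altitude p \<sigma> = infdist p (affine hull (\<sigma> - {p}))"

definition thickness :: "'a::euclidean_space set \<Rightarrow> real" where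
  "thickness \<sigma> = (if card \<sigma> - 1 = 0 then 1
      else Min ((\<lambda>p. altitude p \<sigma>) ` \<sigma>) / (real (card \<sigma> - 1) * Lmax \<sigma>))"

definition good :: "real \<Rightarrow> 'a::euclidean_space set \<Rightarrow> bool" where
  "good \<Gamma>0 \<sigma> \<longleftrightarrow> (\<forall>\<phi>. \<phi> \<subseteq> \<sigma> \<and> \<phi> \<noteq> {} \<longrightarrow> thickness \<phi> \<ge> \<Gamma>0 ^ (card \<phi> - 1))"

definition flake :: "real \<Rightarrow> 'a::euclidean_space set \<Rightarrow> bool" where
  "flake \<Gamma>0 \<sigma> \<longleftrightarrow> is_simplex \<sigma> \<and> \<not> good \<Gamma>0 \<sigma> \<and>
     (\<forall>\<phi>. \<phi> \<subset> \<sigma> \<and> \<phi> \<noteq> {} \<longrightarrow> good \<Gamma>0 \<phi>)"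

definition circumscribing :: "'a::euclidean_space \<Rightarrow> real \<Rightarrow> 'a set \<Rightarrow> bool" where
  "circumscribing c r \<sigma> \<longleftrightarrow> 0 < r \<and> \<sigma> \<subseteq> frontier (ball c r)"

definition forbidden_certified ::
  "'a::euclidean_space set \<Rightarrow> real \<Rightarrow> real \<Rightarrow> real \<Rightarrow> real \<Rightarrow> nat \<Rightarrow> 'a set
     \<Rightarrow> 'a \<Rightarrow> 'a \<Rightarrow> real \<Rightarrow> bool" where
  "forbidden_certified P' \<mu>' \<epsilon>' \<Gamma>0 \<delta>0 k \<tau> p C R \<longleftrightarrow>
     is_simplex \<tau> \<and> card \<tau> = k + 2 \<and> \<tau> \<subseteq> P' \<and> k \<le> DIM('a) \<and> flake \<Gamma>0 \<tau> \<and>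
     p \<in> \<tau> \<and> circumscribing C R (\<tau> - {p}) \<and> R < \<epsilon>' \<and>
     \<bar>norm (p - C) - R\<bar> \<le> \<delta>0 * \<mu>' * \<epsilon>'"

end

theory Submission
  imports Defs
begin

text \<open>For the vertex \<open>q\<close> itself the certifying ball \<open>B(C,R)\<close> already works. For any other
  vertex \<open>p\<close>, move the centre \<open>C\<close> along the normal from the affine hull of
  \<open>\<sigma> - {p}\<close> towards \<open>q\<close>: such a move keeps \<open>\<sigma> - {p}\<close> equidistant from the centre, and a
  displacement of \<open>|\<parallel>q - C\<parallel>\<^sup>2 - R\<^sup>2| / (2h)\<close>, with \<open>h\<close> the altitude of \<open>q\<close> in \<open>\<tau> - {p}\<close>, puts
  \<open>q\<close> on the new sphere. As a proper face of a flake, \<open>\<tau> - {p}\<close> is \<open>\<Gamma>\<^sub>0\<close>-good, so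
  \<open>h \<ge> \<Gamma>\<^sub>0\<^sup>k \<mu>'\<epsilon>'\<close>, while the power of \<open>q\<close> is at most \<open>\<delta>\<^sub>0\<mu>'\<epsilon>'(2R + \<delta>\<^sub>0\<mu>'\<epsilon>')\<close>. Hence the
  centre moves by \<open>O(\<delta>\<^sub>0 R / \<Gamma>\<^sub>0\<^sup>k)\<close>, which bounds both the change of radius and the
  distance from \<open>p\<close> to the new sphere.\<close>

lemma closest_point_affine_orthogonal:
  fixes S :: "'a::euclidean_space set"
  assumes "affine S" "closed S" "y \<in> S"
  shows "(a - closest_point S a) \<bullet> (y - closest_point S a) = 0"
proof -
  let ?c = "closest_point S a"
  have c: "?c \<in> S" using assms closest_point_in_set by blast
  have "2 *\<^sub>R ?c + (-1) *\<^sub>R y \<in> S" using mem_affine[OF assms(1) c assms(3), of 2 "-1"] by simp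
  then have "(a - ?c) \<bullet> ((2 *\<^sub>R ?c + (-1) *\<^sub>R y) - ?c) \<le> 0"
    by (rule closest_point_dot[OF affine_imp_convex[OF assms(1)] assms(2)])
  moreover have "(a - ?c) \<bullet> (y - ?c) \<le> 0"
    by (rule closest_point_dot[OF affine_imp_convex[OF assms(1)] assms(2,3)])
  ultimately show ?thesis by (simp add: algebra_simps inner_diff_right)
qed

lemma infdist_sphere_le:
  fixes x c :: "'a::euclidean_space"
  assumes "0 \<le> r"
  shows "infdist x (sphere c r) \<le> \<bar>dist x c - r\<bar>"
proof (cases "x = c")
  case True
  obtain b :: 'a where b: "b \<in> Basis" using nonempty_Basis by blast
  have "c + r *\<^sub>R b \<in> sphere c r" using b assms by (simp add: dist_norm)
  moreover have "dist x (c + r *\<^sub>R b) = r" using b assms True by (simp add: dist_norm)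
  ultimately show ?thesis using True assms by (metis infdist_le abs_of_nonneg diff_0 abs_minus_cancel dist_self)
next
  case False
  then have dxc: "0 < dist x c" by simp
  let ?z = "c + (r / dist x c) *\<^sub>R (x - c)"
  have "?z \<in> sphere c r" using dxc assms by (simp add: dist_norm norm_minus_commute)
  moreover have "dist x ?z = \<bar>dist x c - r\<bar>"
  proof -
    have "x - ?z = (1 - r / dist x c) *\<^sub>R (x - c)" by (simp add: algebra_simps)
    then have "dist x ?z = \<bar>(1 - r / dist x c) * dist x c\<bar>"
      using dxc by (simp add: dist_norm abs_mult)
    also have "(1 - r / dist x c) * dist x c = dist x c - r" using dxc by (simp add: field_simps)
    finally show ?thesis .
  qed
  ultimately show ?thesis by (metis infdist_le)
qed

lemma sphere_through_extra_point:
  fixes S :: "'a::euclidean_space set"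
  assumes S: "S \<subseteq> sphere C R" and h: "0 < infdist q (affine hull S)"
  obtains Cp where "insert q S \<subseteq> sphere Cp (dist Cp q)"
    and "dist C Cp = \<bar>dist q C ^ 2 - R ^ 2\<bar> / (2 * infdist q (affine hull S))"
proof -
  let ?A = "affine hull S" and ?h = "infdist q (affine hull S)"
  have "S \<noteq> {}" using h by (auto simp: infdist_def)
  then have A: "affine ?A" "closed ?A" "?A \<noteq> {}" by auto
  define a where "a = closest_point ?A q"
  define u where "u = q - a"
  have hu: "?h = norm u"
    using A by (simp add: infdist_eq_setdist setdist_closest_point a_def u_def dist_norm)
  have orth: "(s - a) \<bullet> u = 0" if "s \<in> ?A" for s
    using closest_point_affine_orthogonal[OF A(1,2) that, of q] by (simp add: a_def u_def inner_commute)
  define c where "c = (dist q C ^ 2 - R ^ 2) / (2 * ?h ^ 2)"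
  define w where "w = c *\<^sub>R u"
  define Cp where "Cp = C + w"
  define rsq where "rsq = R ^ 2 - 2 * ((a - C) \<bullet> w) + norm w ^ 2"
  have shift: "dist x Cp ^ 2 = dist x C ^ 2 - 2 * ((x - C) \<bullet> w) + norm w ^ 2" for x
    by (simp add: Cp_def dist_norm power2_norm_eq_inner inner_diff_left inner_diff_right
        inner_add_right inner_commute algebra_simps)
  have "dist s Cp ^ 2 = rsq" if "s \<in> S" for s
  proof -
    have "(s - C) \<bullet> w = (s - a) \<bullet> w + (a - C) \<bullet> w" by (simp add: inner_diff_left)
    moreover have "(s - a) \<bullet> w = 0" using orth that hull_inc by (fastforce simp: w_def)
    moreover have "dist s C = R" using S that by (auto simp: dist_commute)
    ultimately show ?thesis by (simp add: shift rsq_def field_simps)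
  qed
  moreover have "dist q Cp ^ 2 = rsq"
  proof -
    have "(q - C) \<bullet> w = c * ?h ^ 2 + (a - C) \<bullet> w"
      by (simp add: w_def hu u_def power2_norm_eq_inner inner_diff_left algebra_simps)
    moreover have "c * ?h ^ 2 = (dist q C ^ 2 - R ^ 2) / 2" using h by (simp add: c_def)
    ultimately show ?thesis by (simp add: shift rsq_def field_simps)
  qed
  ultimately have "dist s Cp = dist q Cp" if "s \<in> S" for s
    using that by (metis power2_eq_iff_nonneg zero_le_dist)
  then have "insert q S \<subseteq> sphere Cp (dist Cp q)" by (auto simp: dist_commute)
  moreover have "dist C Cp = \<bar>dist q C ^ 2 - R ^ 2\<bar> / (2 * ?h)"
    using h by (simp add: Cp_def w_def dist_norm c_def hu abs_mult power2_eq_square)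
  ultimately show thesis by (rule that)
qed

lemma abs_dist_diff_le: "\<bar>dist x y - dist x z\<bar> \<le> dist y z"
  for x y z :: "'a::metric_space"
  using dist_triangle[of x y z] dist_triangle[of x z y] by (simp add: dist_commute abs_le_iff)

lemma sphere_recentre_bounds:
  fixes S :: "'a::euclidean_space set"
  assumes S: "S \<subseteq> sphere C R" "s \<in> S" and p: "dist p C = R"
    and h: "0 < h" "h \<le> infdist q (affine hull S)" and q: "\<bar>dist q C - R\<bar> \<le> \<eta>"
  obtains Cp Rp where "insert q S \<subseteq> sphere Cp Rp"
    and "\<bar>Rp - R\<bar> \<le> \<eta> * (2 * R + \<eta>) / (2 * h)"
    and "\<bar>dist p Cp - Rp\<bar> \<le> \<eta> * (2 * R + \<eta>) / h"
proof -
  obtain Cp where sph: "insert q S \<subseteq> sphere Cp (dist Cp q)"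
    and dCp: "dist C Cp = \<bar>dist q C ^ 2 - R ^ 2\<bar> / (2 * infdist q (affine hull S))"
    using sphere_through_extra_point[OF S(1)] h by (metis order_less_le_trans)
  have R: "0 \<le> R" using p zero_le_dist by metis
  define \<rho> where "\<rho> = \<eta> * (2 * R + \<eta>) / (2 * h)"
  have "dist q C ^ 2 - R ^ 2 = (dist q C - R) * (dist q C + R)"
    by (simp add: power2_eq_square algebra_simps)
  then have "\<bar>dist q C ^ 2 - R ^ 2\<bar> = \<bar>dist q C - R\<bar> * (dist q C + R)"
    using R by (simp add: abs_mult)
  also have "\<dots> \<le> \<eta> * (2 * R + \<eta>)"
    using q R by (intro mult_mono) auto
  finally have "dist C Cp \<le> \<rho>"
    unfolding dCp \<rho>_def using h by (intro frac_le) auto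
  moreover have "dist s Cp = dist Cp q" "dist s C = R" using sph S by (auto simp: dist_commute)
  ultimately have "\<bar>dist Cp q - R\<bar> \<le> \<rho>" "\<bar>dist p Cp - R\<bar> \<le> \<rho>"
    using abs_dist_diff_le[of s Cp C] abs_dist_diff_le[of p Cp C] p by (auto simp: dist_commute)
  moreover have "\<eta> * (2 * R + \<eta>) / h = 2 * \<rho>" using h by (simp add: \<rho>_def)
  ultimately show thesis
    by (intro that[OF sph]) (simp_all add: \<rho>_def[symmetric] abs_le_iff)
qed

lemma two_le_card_obtain_distinct:
  assumes "finite A" "2 \<le> card A"
  obtains a b where "a \<in> A" "b \<in> A" "a \<noteq> b"
proof -
  have "\<not> card A \<le> Suc 0" using assms(2) by simp
  then show thesis using card_le_Suc0_iff_eq[OF assms(1)] that by blast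
qed

lemma pair_dists_finite: "finite S \<Longrightarrow> finite {dist p q | p q. p \<in> S \<and> q \<in> S \<and> p \<noteq> q}"
  by (rule finite_subset[of _ "(\<lambda>(p, q). dist p q) ` (S \<times> S)"]) auto

lemma dist_le_Lmax: "finite S \<Longrightarrow> p \<in> S \<Longrightarrow> q \<in> S \<Longrightarrow> p \<noteq> q \<Longrightarrow> dist p q \<le> Lmax S"
  unfolding Lmax_def by (rule Max_ge) (auto intro: pair_dists_finite)

lemma separated_le_lmin:
  assumes "separated S s" "finite S" "p \<in> S" "q \<in> S" "p \<noteq> q"
  shows "s \<le> lmin S"
  using assms unfolding lmin_def separated_def by (subst Min_ge_iff) (auto intro: pair_dists_finite)

lemma thickness_card_le_2:
  assumes "finite \<phi>" "\<phi> \<noteq> {}" "card \<phi> \<le> 2"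
  shows "thickness \<phi> = 1"
proof (cases "card \<phi> = 2")
  case True
  then obtain a b where ab: "\<phi> = {a, b}" "a \<noteq> b" by (meson card_2_iff)
  have "{dist p q | p q. p \<in> \<phi> \<and> q \<in> \<phi> \<and> p \<noteq> q} = {dist a b}"
    using ab by (auto simp: dist_commute)
  then have "Lmax \<phi> = dist a b" by (simp add: Lmax_def)
  moreover have "altitude a \<phi> = dist a b" "altitude b \<phi> = dist a b"
    using ab by (auto simp: altitude_def insert_Diff_if dist_commute)
  ultimately show ?thesis using True ab by (simp add: thickness_def)
next
  case False
  moreover have "0 < card \<phi>" using assms by (simp add: card_gt_0_iff)
  ultimately have "card \<phi> = 1" using assms(3) by linarith
  then show ?thesis by (simp add: thickness_def)
qed

lemma flake_card_ge_3:
  fixes \<tau> :: "'a::euclidean_space set"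
  assumes "flake \<Gamma> \<tau>" "0 \<le> \<Gamma>" "\<Gamma> \<le> 1"
  shows "3 \<le> card \<tau>"
proof (rule ccontr)
  assume "\<not> 3 \<le> card \<tau>"
  moreover have "finite \<tau>" using assms by (simp add: flake_def is_simplex_def)
  ultimately have "thickness \<phi> = 1" if "\<phi> \<subseteq> \<tau>" "\<phi> \<noteq> {}" for \<phi>
    using that card_mono[OF _ that(1)] by (intro thickness_card_le_2) (auto intro: finite_subset)
  then have "good \<Gamma> \<tau>" using assms by (simp add: good_def power_le_one)
  then show False using assms by (simp add: flake_def)
qed

lemma altitude_ge_of_good:
  fixes \<phi> :: "'a::euclidean_space set"
  assumes "good \<Gamma> \<phi>" "finite \<phi>" "2 \<le> card \<phi>" "x \<in> \<phi>"
  shows "\<Gamma> ^ (card \<phi> - 1) * (real (card \<phi> - 1) * Lmax \<phi>) \<le> altitude x \<phi>"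
proof -
  obtain a b where ab: "a \<in> \<phi>" "b \<in> \<phi>" "a \<noteq> b"
    using two_le_card_obtain_distinct[OF assms(2,3)] .
  have "0 < dist a b" using ab by simp
  also have "dist a b \<le> Lmax \<phi>" using dist_le_Lmax[OF assms(2) ab] .
  finally have pos: "0 < real (card \<phi> - 1) * Lmax \<phi>" using assms(3) by simp
  define m where "m = Min ((\<lambda>y. altitude y \<phi>) ` \<phi>)"
  have "\<Gamma> ^ (card \<phi> - 1) \<le> thickness \<phi>" using assms(1,4) by (auto simp: good_def)
  also have "thickness \<phi> = m / (real (card \<phi> - 1) * Lmax \<phi>)"
    using assms(3) by (simp add: thickness_def m_def)
  finally have "\<Gamma> ^ (card \<phi> - 1) * (real (card \<phi> - 1) * Lmax \<phi>) \<le> m"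
    using pos_le_divide_eq[OF pos] by blast
  also have "m \<le> altitude x \<phi>" unfolding m_def using assms(2,4) by (intro Min_le) auto
  finally show ?thesis .
qed

lemma altitude_ge_separated_good:
  fixes \<phi> :: "'a::euclidean_space set"
  assumes "good \<Gamma> \<phi>" "0 \<le> \<Gamma>" "finite \<phi>" "card \<phi> = k + 1" "1 \<le> k"
    and "separated \<phi> m" "x \<in> \<phi>"
  shows "\<Gamma> ^ k * m \<le> altitude x \<phi>"
proof -
  obtain a b where ab: "a \<in> \<phi>" "b \<in> \<phi>" "a \<noteq> b"
    using two_le_card_obtain_distinct[OF assms(3)] assms(4,5) by auto
  have "m \<le> dist a b" using assms(6) ab by (simp add: separated_def)
  also have "\<dots> \<le> Lmax \<phi>" using dist_le_Lmax[OF assms(3) ab] .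
  also have "Lmax \<phi> \<le> real k * Lmax \<phi>"
  proof -
    have "0 \<le> Lmax \<phi>" using dist_le_Lmax[OF assms(3) ab] zero_le_dist[of a b] by linarith
    then show ?thesis using mult_right_mono[of 1 "real k" "Lmax \<phi>"] assms(5) by simp
  qed
  finally have "\<Gamma> ^ k * m \<le> \<Gamma> ^ k * (real k * Lmax \<phi>)"
    using assms(2) by (intro mult_left_mono) auto
  also have "\<dots> \<le> altitude x \<phi>"
    using altitude_ge_of_good[OF assms(1,3) _ assms(7)] assms(4,5) by simp
  finally show ?thesis .
qed

lemma recentre_radius_estimate:
  fixes \<delta> \<mu> G m R :: real
  assumes "0 \<le> \<delta>" "\<delta> \<le> 1/4" "0 < \<mu>" "\<mu> \<le> 1" "0 < G" "0 < m" "m \<le> 2 * R"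
  shows "\<delta> * m * (2 * R + \<delta> * m) / (2 * (G * m)) \<le> 3 * \<delta> / (\<mu> * G) * R"
proof -
  have "\<delta> * m * (2 * R + \<delta> * m) / (2 * (G * m)) = \<delta> * (2 * R + \<delta> * m) / (2 * G)"
    using assms by (simp add: field_simps)
  also have "\<dots> \<le> \<delta> * (5/2 * R) / (2 * G)"
  proof -
    have "\<delta> * m \<le> R / 2" using mult_right_mono[of \<delta> "1/4" m] assms by linarith
    then show ?thesis using assms by (intro divide_right_mono mult_left_mono) auto
  qed
  also have "\<dots> = \<delta> * R / G * (5/4)" by simp
  also have "\<dots> \<le> \<delta> * R / G * (3 / \<mu>)"
    using assms by (intro mult_left_mono) (auto simp: field_simps)
  also have "\<dots> = 3 * \<delta> / (\<mu> * G) * R" by (simp add: field_simps)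
  finally show ?thesis .
qed

lemma forbidden_certified_apex_ball:
  fixes P' :: "'a::euclidean_space set"
  assumes net: "is_net P' \<mu>' \<epsilon>'" and \<Gamma>0: "0 < \<Gamma>0" "\<Gamma>0 \<le> 1" and \<delta>0: "0 \<le> \<delta>0"
    and fc: "forbidden_certified P' \<mu>' \<epsilon>' \<Gamma>0 \<delta>0 k \<tau> q C R"
  shows "\<exists>Cp Rp. circumscribing Cp Rp (\<tau> - {q}) \<and>
           Rp \<le> (1 + 3 * \<delta>0 / (\<mu>' * \<Gamma>0 ^ k)) * R \<and>
           infdist q (frontier (ball Cp Rp)) \<le> 6 * \<delta>0 / (\<mu>'^2 * \<Gamma>0 ^ k) * lmin (\<tau> - {q})"
proof -
  have \<mu>': "0 < \<mu>'" "\<mu>' \<le> 1" and sep: "separated (\<tau> - {q}) (\<mu>' * \<epsilon>')"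
    using net fc by (auto simp: is_net_def forbidden_certified_def separated_def)
  have fin: "finite (\<tau> - {q})" and R: "0 < R" and qC: "\<bar>dist q C - R\<bar> \<le> \<delta>0 * (\<mu>' * \<epsilon>')"
    using fc by (auto simp: forbidden_certified_def is_simplex_def circumscribing_def dist_norm)
  have "3 \<le> card \<tau>" using fc \<Gamma>0 by (intro flake_card_ge_3) (auto simp: forbidden_certified_def)
  then have "2 \<le> card (\<tau> - {q})" using fc by (simp add: forbidden_certified_def)
  then obtain a b where ab: "a \<in> \<tau> - {q}" "b \<in> \<tau> - {q}" "a \<noteq> b"
    using two_le_card_obtain_distinct[OF fin] by blast
  have lmin: "\<mu>' * \<epsilon>' \<le> lmin (\<tau> - {q})" using separated_le_lmin[OF sep fin ab] .
  have "\<mu>'^2 * \<Gamma>0 ^ k \<le> 1" using \<mu>' \<Gamma>0 by (intro mult_le_one power_le_one) auto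
  then have factor: "1 \<le> 6 / (\<mu>'^2 * \<Gamma>0 ^ k)" using \<mu>' \<Gamma>0 by (simp add: le_divide_eq)
  have "0 < \<mu>' * \<epsilon>'" using net by (simp add: is_net_def)
  then have nonneg: "0 \<le> \<delta>0 * lmin (\<tau> - {q})" using \<delta>0 lmin by simp
  have "infdist q (frontier (ball C R)) \<le> \<bar>dist q C - R\<bar>"
    using infdist_sphere_le[of R q C] R by simp
  also have "\<dots> \<le> \<delta>0 * (\<mu>' * \<epsilon>')" by (rule qC)
  also have "\<dots> \<le> \<delta>0 * lmin (\<tau> - {q})" using lmin \<delta>0 by (rule mult_left_mono)
  also have "\<dots> \<le> 6 / (\<mu>'^2 * \<Gamma>0 ^ k) * (\<delta>0 * lmin (\<tau> - {q}))"
    using mult_right_mono[OF factor nonneg] by simp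
  finally have "infdist q (frontier (ball C R)) \<le> 6 * \<delta>0 / (\<mu>'^2 * \<Gamma>0 ^ k) * lmin (\<tau> - {q})"
    by simp
  moreover have "R \<le> (1 + 3 * \<delta>0 / (\<mu>' * \<Gamma>0 ^ k)) * R" using R \<mu>' \<Gamma>0 \<delta>0 by simp
  moreover have "circumscribing C R (\<tau> - {q})" using fc by (simp add: forbidden_certified_def)
  ultimately show ?thesis by blast
qed

lemma forbidden_certified_recentred_ball:
  fixes P' :: "'a::euclidean_space set"
  assumes net: "is_net P' \<mu>' \<epsilon>'" and \<Gamma>0: "0 < \<Gamma>0" "\<Gamma>0 \<le> 1" and \<delta>0: "0 \<le> \<delta>0" "\<delta>0 \<le> 1/4"
    and fc: "forbidden_certified P' \<mu>' \<epsilon>' \<Gamma>0 \<delta>0 k \<tau> q C R" and p: "p \<in> \<tau>" "p \<noteq> q"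
  shows "\<exists>Cp Rp. circumscribing Cp Rp (\<tau> - {p}) \<and>
           Rp \<le> (1 + 3 * \<delta>0 / (\<mu>' * \<Gamma>0 ^ k)) * R \<and>
           infdist p (frontier (ball Cp Rp)) \<le> 6 * \<delta>0 / (\<mu>'^2 * \<Gamma>0 ^ k) * lmin (\<tau> - {p})"
proof -
  define m where "m = \<mu>' * \<epsilon>'"
  define G where "G = \<Gamma>0 ^ k"
  define S where "S = \<tau> - {p, q}"
  have \<mu>': "0 < \<mu>'" "\<mu>' \<le> 1" and m: "0 < m" and G: "0 < G"
    using net \<Gamma>0 by (auto simp: is_net_def m_def G_def)
  have fin: "finite \<tau>" and card: "card \<tau> = k + 2" and fl: "flake \<Gamma>0 \<tau>" and q: "q \<in> \<tau>"
    and sph: "\<tau> - {q} \<subseteq> sphere C R" and R\<epsilon>: "R < \<epsilon>'" and qC: "\<bar>dist q C - R\<bar> \<le> \<delta>0 * m"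
    using fc by (auto simp: forbidden_certified_def is_simplex_def circumscribing_def dist_norm m_def)
  have sep: "separated \<tau> m"
    using net fc by (auto simp: is_net_def forbidden_certified_def separated_def m_def)
  have "1 \<le> k" using flake_card_ge_3[OF fl] \<Gamma>0 card by simp
  moreover have "card S = k" using fin card p q by (simp add: S_def card_Diff_subset)
  ultimately obtain s where s: "s \<in> S" by fastforce
  have S: "S \<subseteq> sphere C R" using sph by (auto simp: S_def)
  have pC: "dist p C = R" using sph p by (auto simp: dist_commute)
  have face: "\<tau> - {p} = insert q S" using p q by (auto simp: S_def)
  have "m \<le> dist p s" using sep s p by (auto simp: separated_def S_def)
  also have "\<dots> \<le> 2 * R" using dist_triangle[of p s C] pC s S by (auto simp: dist_commute)
  finally have m2R: "m \<le> 2 * R" .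
  have "\<tau> - {p} \<subset> \<tau>" "\<tau> - {p} \<noteq> {}" using p q by auto
  then have "good \<Gamma>0 (\<tau> - {p})" using fl by (simp add: flake_def)
  then have "G * m \<le> altitude q (\<tau> - {p})"
    using \<open>1 \<le> k\<close> sep fin card p q \<Gamma>0 unfolding G_def
    by (intro altitude_ge_separated_good) (auto simp: separated_def)
  also have "altitude q (\<tau> - {p}) = infdist q (affine hull S)"
    using face by (simp add: altitude_def S_def)
  finally have h: "G * m \<le> infdist q (affine hull S)" .
  obtain Cp Rp where sphp: "insert q S \<subseteq> sphere Cp Rp"
    and bR: "\<bar>Rp - R\<bar> \<le> \<delta>0 * m * (2 * R + \<delta>0 * m) / (2 * (G * m))"
    and bp: "\<bar>dist p Cp - Rp\<bar> \<le> \<delta>0 * m * (2 * R + \<delta>0 * m) / (G * m)"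
    by (rule sphere_recentre_bounds[OF S s pC mult_pos_pos[OF G m] h qC])
  have est: "\<delta>0 * m * (2 * R + \<delta>0 * m) / (2 * (G * m)) \<le> 3 * \<delta>0 / (\<mu>' * G) * R"
    using recentre_radius_estimate[OF \<delta>0 \<mu>' G m m2R] .
  have Rp: "0 < Rp"
    using sphp s by (cases "Rp = 0") (auto simp: S_def)
  have "\<mu>' * R \<le> m" using R\<epsilon> \<mu>' by (simp add: m_def)
  also have "m \<le> lmin (\<tau> - {p})"
    using sep fin face s by (intro separated_le_lmin[of _ _ q s]) (auto simp: separated_def S_def)
  finally have lmin: "\<mu>' * R \<le> lmin (\<tau> - {p})" .
  have "infdist p (frontier (ball Cp Rp)) \<le> \<bar>dist p Cp - Rp\<bar>"
    using infdist_sphere_le[of Rp p Cp] Rp by simp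
  also have "\<dots> \<le> 2 * (3 * \<delta>0 / (\<mu>' * G) * R)"
  proof -
    have twice: "\<delta>0 * m * (2 * R + \<delta>0 * m) / (G * m)
        = 2 * (\<delta>0 * m * (2 * R + \<delta>0 * m) / (2 * (G * m)))"
      by simp
    show ?thesis using bp est unfolding twice by linarith
  qed
  also have "\<dots> = 6 * \<delta>0 / (\<mu>'^2 * G) * (\<mu>' * R)"
    using \<mu>' by (simp add: field_simps power2_eq_square)
  also have "\<dots> \<le> 6 * \<delta>0 / (\<mu>'^2 * G) * lmin (\<tau> - {p})"
    using lmin \<delta>0 G by (intro mult_left_mono) auto
  finally have "infdist p (frontier (ball Cp Rp)) \<le> 6 * \<delta>0 / (\<mu>'^2 * G) * lmin (\<tau> - {p})" .
  moreover have "Rp \<le> (1 + 3 * \<delta>0 / (\<mu>' * G)) * R"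
    using bR est by (simp add: algebra_simps)
  moreover have "circumscribing Cp Rp (\<tau> - {p})"
    using sphp Rp face by (simp add: circumscribing_def)
  ultimately show ?thesis unfolding G_def by blast
qed

text \<open>The hypotheses on \<open>\<sigma>\<close> only name \<open>\<tau> - {q}\<close>; the argument does not use them.\<close>

theorem mainTheorem7:
  fixes P' :: "'a::euclidean_space set" and \<mu>' \<epsilon>' \<Gamma>0 \<delta>0 R :: real
    and k :: nat and \<tau> \<sigma> :: "'a set" and q C :: 'a
  assumes "is_net P' \<mu>' \<epsilon>'"
    and "0 < \<Gamma>0" "\<Gamma>0 \<le> 1"
    and "0 \<le> \<delta>0" "\<delta>0 \<le> 1/4"
    and "q \<notin> \<sigma>" "\<tau> = insert q \<sigma>"
    and "forbidden_certified P' \<mu>' \<epsilon>' \<Gamma>0 \<delta>0 k \<tau> q C R"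
  shows "\<forall>p\<in>\<tau>. \<exists>Cp Rp. circumscribing Cp Rp (\<tau> - {p}) \<and>
           Rp \<le> (1 + 3 * \<delta>0 / (\<mu>' * \<Gamma>0 ^ k)) * R \<and>
           infdist p (frontier (ball Cp Rp)) \<le> 6 * \<delta>0 / (\<mu>'^2 * \<Gamma>0 ^ k) * lmin (\<tau> - {p})"
  using forbidden_certified_apex_ball[OF assms(1-4,8)]
    forbidden_certified_recentred_ball[OF assms(1-5,8)]
  by blast

end
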